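(* For all integers $n\ge1$ and $r\ge1$, \[ \sum_{k=1}^{n}\binom{k-1}{r-1}\omega(n-k)=\sum_{\substack{m+k=n\\ m\ge1,\ k\ge0}}c_\psi(m,r)\,\Omega_m(k). \]
   Context: A composition of $n$ is an ordered sequence $(a_1,\dots,a_r)$ of positive integers with $a_1+\dots+a_r=n$; it is relatively prime if $\gcd(a_1,\dots,a_r)=1$. $c_\psi(n,r)$ is the number of relatively prime compositions of $n$ with exactly $r$ parts. $\omega:\mathbb{Z}\to\mathbb{Z}$ is defined by $\omega(0)=1$; $\omega(m)=(-1)^j$ if $m=\frac{3j^2\pm j}{2}$ for some integer $j\ge1$; $\omega(m)=0$ otherwise (in particular for $m<0$). For $m\ge1$ and integer $k$, $\Omega_m(k)=\sum_{j\ge0}\omega(k-jm)=\omega(k)+\omega(k-m)+\omega(k-2m)+\cdots$. *)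

theory Defs
  imports Main
begin

text \<open>Compositions of n with r parts are lists of positive naturals of length r summing to n;
 relatively prime means the gcd of the parts is 1.\<close>
definition c_psi :: "nat \<Rightarrow> nat \<Rightarrow> nat" where
  "c_psi n r = card {as :: nat list. length as = r \<and> (\<forall>a\<in>set as. 0 < a)
                      \<and> sum_list as = n \<and> Gcd (set as) = 1}"

text \<open>Pentagonal-number sign function.\<close>
definition omega :: "int \<Rightarrow> int" where
  "omega m = (if m = 0 then 1
     else if \<exists>j::nat. 1 \<le> j \<and> (2 * m = 3 * int j ^ 2 + int j \<or> 2 * m = 3 * int j ^ 2 - int j)
     then (-1) ^ (THE j::nat. 1 \<le> j \<and> (2 * m = 3 * int j ^ 2 + int j \<or> 2 * m = 3 * int j ^ 2 - int j))
     else 0)"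

text \<open>Omega_m(k) = sum over j \<ge> 0 of omega(k - j m); only the terms with k - j m \<ge> 0 can be
 nonzero, and for m \<ge> 1 these are finitely many.\<close>
definition Omega :: "nat \<Rightarrow> int \<Rightarrow> int" where
  "Omega m k = (\<Sum>j\<in>{j::nat. int j * int m \<le> k}. omega (k - int j * int m))"

end

theory Submission
  imports Defs
begin

text \<open>Grouping the compositions of \<open>k\<close> with \<open>r\<close> parts by the gcd \<open>d\<close> of their parts and
dividing by \<open>d\<close> gives \<open>binom (k - 1) (r - 1) = \<Sum>d | d dvd k. c_psi d r\<close>.  On the other side,
\<open>Omega m (n - m)\<close> is the sum of \<open>omega (n - t)\<close> over the multiples \<open>t\<close> of \<open>m\<close> in \<open>{1..n}\<close>.
Exchanging the summations over \<open>m\<close> and its multiples \<open>t\<close> turns the right-hand side into the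
left-hand side.  No property of \<open>omega\<close> is used: the identity holds for any weight function.\<close>

definition compositions :: "nat \<Rightarrow> nat \<Rightarrow> nat list set" where
  "compositions N r = {as. length as = r \<and> (\<forall>a\<in>set as. 0 < a) \<and> sum_list as = N}"

lemma length_le_sum_list_pos: "\<forall>a\<in>set as. 0 < (a::nat) \<Longrightarrow> length as \<le> sum_list as"
  by (induction as) auto

lemma finite_compositions: "finite (compositions N r)"
proof (rule finite_subset)
  show "compositions N r \<subseteq> {xs. set xs \<subseteq> {0..N} \<and> length xs = r}"
    unfolding compositions_def using member_le_sum_list by fastforce
  show "finite {xs. set xs \<subseteq> {0..N} \<and> length xs = r}"
    by (rule finite_lists_length_eq) simp
qed

lemma sum_list_map_Suc: "sum_list (map Suc xs) = sum_list xs + length xs"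
  by (induction xs) auto

lemma compositions_eq_image_map_Suc:
  assumes "r \<le> N"
  shows "compositions N r = map Suc ` {l. length l = r \<and> sum_list l = N - r}"
proof (intro equalityI subsetI)
  fix as assume as: "as \<in> compositions N r"
  define bs where "bs = map (\<lambda>a. a - 1) as"
  have "as = map Suc bs"
    using as unfolding bs_def compositions_def by (auto intro!: map_idI[symmetric])
  with as have "length bs = r" "sum_list bs = N - r"
    by (auto simp: compositions_def sum_list_map_Suc)
  with \<open>as = map Suc bs\<close> show "as \<in> map Suc ` {l. length l = r \<and> sum_list l = N - r}"
    by blast
qed (use assms in \<open>auto simp: compositions_def sum_list_map_Suc\<close>)

lemma card_compositions:
  assumes "1 \<le> N" "1 \<le> r"
  shows "card (compositions N r) = (N - 1) choose (r - 1)"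
proof (cases "r \<le> N")
  case True
  have "card (compositions N r) = card {l. length l = r \<and> sum_list l = N - r}"
    unfolding compositions_eq_image_map_Suc[OF True]
    by (rule card_image[OF inj_on_subset[OF inj_mapI[OF inj_Suc] subset_UNIV]])
  also have "\<dots> = (N - 1) choose (N - r)"
    using True by (simp add: card_length_sum_list)
  also have "\<dots> = (N - 1) choose (r - 1)"
  proof -
    have "N - 1 - (r - 1) = N - r" using assms by simp
    then show ?thesis using True binomial_symmetric[of "r - 1" "N - 1"] by simp
  qed
  finally show ?thesis .
next
  case False
  then have "compositions N r = {}"
    unfolding compositions_def using length_le_sum_list_pos by fastforce
  then show ?thesis using False assms by simp
qed

lemma compositions_Gcd_eq_image:
  assumes "0 < d" "d dvd N"
  shows "{as \<in> compositions N r. Gcd (set as) = d}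
         = map ((*) d) ` {as. length as = r \<and> (\<forall>a\<in>set as. 0 < a)
                              \<and> sum_list as = N div d \<and> Gcd (set as) = 1}"
proof (intro equalityI subsetI)
  fix as assume as: "as \<in> {as \<in> compositions N r. Gcd (set as) = d}"
  define bs where "bs = map (\<lambda>a. a div d) as"
  have "as = map ((*) d) bs"
    using as unfolding bs_def by (auto intro!: map_idI[symmetric] dest: Gcd_dvd)
  moreover have "Gcd (set bs) = 1"
    using as \<open>0 < d\<close> by (simp add: \<open>as = map ((*) d) bs\<close> Gcd_mult)
  moreover have "N = d * sum_list bs"
    using as by (simp add: \<open>as = map ((*) d) bs\<close> compositions_def sum_list_const_mult)
  then have "sum_list bs = N div d"
    using \<open>0 < d\<close> by simp
  ultimately show "as \<in> map ((*) d) ` {as. length as = r \<and> (\<forall>a\<in>set as. 0 < a)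
                              \<and> sum_list as = N div d \<and> Gcd (set as) = 1}"
    using as unfolding compositions_def by (intro image_eqI) auto
qed (use assms in \<open>auto simp: compositions_def sum_list_const_mult Gcd_mult\<close>)

lemma card_compositions_Gcd_eq:
  assumes "0 < d" "d dvd N"
  shows "card {as \<in> compositions N r. Gcd (set as) = d} = c_psi (N div d) r"
  unfolding compositions_Gcd_eq_image[OF assms] c_psi_def
  using \<open>0 < d\<close> by (intro card_image inj_mapI) (simp add: inj_on_def)

lemma dvd_sum_list: "\<forall>a\<in>set as. d dvd a \<Longrightarrow> (d::'a::comm_semiring_1) dvd sum_list as"
  by (induction as) auto

lemma sum_divisors_c_psi:
  assumes "1 \<le> N" "1 \<le> r"
  shows "(\<Sum>d | d dvd N. c_psi d r) = (N - 1) choose (r - 1)"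
proof -
  have fin: "finite {d. d dvd N}" using assms by (simp add: finite_divisors_nat)
  have Gcd_dvd_N: "Gcd (set as) dvd N" if "as \<in> compositions N r" for as
    using that unfolding compositions_def
    by (metis (mono_tags, lifting) Gcd_dvd dvd_sum_list mem_Collect_eq)
  have "(\<Sum>d | d dvd N. c_psi d r) = (\<Sum>d | d dvd N. c_psi (N div d) r)"
    using assms by (intro sum.reindex_bij_witness[where i = "\<lambda>d. N div d" and j = "\<lambda>d. N div d"])
      (auto simp: div_div_eq_right dvd_div_eq_0_iff)
  also have "\<dots> = (\<Sum>d | d dvd N. card {as \<in> compositions N r. Gcd (set as) = d})"
    using assms by (intro sum.cong refl card_compositions_Gcd_eq[symmetric]) (auto intro: dvd_pos_nat)
  also have "\<dots> = card (\<Union>d\<in>{d. d dvd N}. {as \<in> compositions N r. Gcd (set as) = d})"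
    by (rule card_UN_disjoint[symmetric]) (auto simp: fin finite_compositions)
  also have "(\<Union>d\<in>{d. d dvd N}. {as \<in> compositions N r. Gcd (set as) = d}) = compositions N r"
    using Gcd_dvd_N by auto
  finally show ?thesis using card_compositions[OF assms] by simp
qed

lemma Omega_eq_sum_multiples:
  assumes "1 \<le> m"
  shows "Omega m (int n - int m) = (\<Sum>t | t \<in> {1..n} \<and> m dvd t. omega (int n - int t))"
  unfolding Omega_def
proof (rule sum.reindex_bij_witness[where j = "\<lambda>j. (j + 1) * m" and i = "\<lambda>t. t div m - 1"])
  fix j assume "j \<in> {j. int j * int m \<le> int n - int m}"
  then have "(j + 1) * m \<le> n" by (simp add: algebra_simps flip: of_nat_mult of_nat_add)
  then show "(j + 1) * m div m - 1 = j" "(j + 1) * m \<in> {t. t \<in> {1..n} \<and> m dvd t}"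
    using assms by auto
  show "omega (int n - int ((j + 1) * m)) = omega (int n - int m - int j * int m)"
    by (simp add: algebra_simps)
next
  fix t assume "t \<in> {t. t \<in> {1..n} \<and> m dvd t}"
  then obtain k where k: "t = m * k" "1 \<le> k" "m * k \<le> n"
    by (auto elim!: dvdE)
  then show "(t div m - 1 + 1) * m = t" using assms by simp
  from k have "(k - 1) * m + m \<le> n"
    by (cases k) (auto simp: mult.commute)
  then have "int (k - 1) * int m + int m \<le> int n"
    by (metis of_nat_add of_nat_le_iff of_nat_mult)
  then have "int (k - 1) * int m \<le> int n - int m"
    by linarith
  then show "t div m - 1 \<in> {j. int j * int m \<le> int n - int m}" using k assms by simp
qed

lemma sum_sum_multiples_swap:
  fixes g f :: "nat \<Rightarrow> 'a::comm_semiring_0"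
  shows "(\<Sum>m=1..n. g m * (\<Sum>t | t \<in> {1..n} \<and> m dvd t. f t))
         = (\<Sum>t=1..n. (\<Sum>m | m dvd t. g m) * f t)"
proof -
  have "(\<Sum>m=1..n. g m * (\<Sum>t | t \<in> {1..n} \<and> m dvd t. f t))
        = (\<Sum>m\<in>{1..n}. \<Sum>t\<in>{t\<in>{1..n}. m dvd t}. g m * f t)"
    by (simp add: sum_distrib_left)
  also have "\<dots> = (\<Sum>t\<in>{1..n}. \<Sum>m\<in>{m\<in>{1..n}. m dvd t}. g m * f t)"
    by (rule sum.swap_restrict) auto
  also have "\<dots> = (\<Sum>t=1..n. (\<Sum>m | m dvd t. g m) * f t)"
  proof (intro sum.cong refl)
    fix t assume "t \<in> {1..n}"
    then have "{m\<in>{1..n}. m dvd t} = {m. m dvd t}"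
      by (auto dest: dvd_imp_le intro: dvd_pos_nat)
    then show "(\<Sum>m\<in>{m\<in>{1..n}. m dvd t}. g m * f t) = (\<Sum>m | m dvd t. g m) * f t"
      by (simp add: sum_distrib_right)
  qed
  finally show ?thesis .
qed

theorem mainTheorem11:
  fixes n r :: nat
  assumes "1 \<le> n" and "1 \<le> r"
  shows "(\<Sum>k=1..n. int ((k - 1) choose (r - 1)) * omega (int n - int k))
         = (\<Sum>m=1..n. int (c_psi m r) * Omega m (int n - int m))"
proof -
  have "(\<Sum>m=1..n. int (c_psi m r) * Omega m (int n - int m))
        = (\<Sum>m=1..n. int (c_psi m r) * (\<Sum>t | t \<in> {1..n} \<and> m dvd t. omega (int n - int t)))"
    by (intro sum.cong refl) (simp add: Omega_eq_sum_multiples)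
  also have "\<dots> = (\<Sum>k=1..n. (\<Sum>d | d dvd k. int (c_psi d r)) * omega (int n - int k))"
    by (rule sum_sum_multiples_swap)
  also have "\<dots> = (\<Sum>k=1..n. int ((k - 1) choose (r - 1)) * omega (int n - int k))"
  proof (intro sum.cong refl)
    fix k assume "k \<in> {1..n}"
    then have "int (\<Sum>d | d dvd k. c_psi d r) = int ((k - 1) choose (r - 1))"
      using \<open>1 \<le> r\<close> by (simp add: sum_divisors_c_psi)
    then show "(\<Sum>d | d dvd k. int (c_psi d r)) * omega (int n - int k)
               = int ((k - 1) choose (r - 1)) * omega (int n - int k)"
      by simp
  qed
  finally show ?thesis ..
qed

end
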